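(* $\displaystyle\int_{\alpha}^{\infty}\left[u - \cosh^{-1}(\sinh u)\right]\,du = \frac{\pi^2}{16} - \frac12\ln^2\!\left(1+\sqrt{2}\right)$, where $\alpha = \sinh^{-1}(1) = \ln(1+\sqrt{2})$.
   Context: $\sinh^{-1}x = \ln\!\left(x+\sqrt{x^2+1}\right)$ for all real $x$, and $\cosh^{-1}x := \ln\!\left(x+\sqrt{x^2-1}\right)$ for real $x \ge 1$ (the inverse of $\cosh$ restricted to $[0,\infty)$). *)

theory Defs
  imports "HOL-Analysis.Analysis"
begin

end

theory Submission
  imports Defs "HOL-Real_Asymp.Real_Asymp"
begin

(* Write f u = u - arcosh (sinh u) and let chi2 be Legendre's chi function
   chi2 x = sum_k x^(2k+1) / (2k+1)^2, whose derivative is artanh x / x.  Because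
   sinh f = sinh^2 u - cosh u * sqrt (sinh^2 u - 1), the function f^2/4 - chi2 (tanh (f/2)) is a
   primitive of f.  It tends to 0 at infinity, and at alpha = arsinh 1 we have f = alpha, so the
   integral is chi2 (tanh (alpha/2)) - alpha^2/4.  Finally tanh (alpha/2) = sqrt 2 - 1 is the fixed
   point of x |-> (1 - x)/(1 + x), where Landen's identity
   chi2 x + chi2 ((1 - x)/(1 + x)) = pi^2/8 + ln x * artanh x evaluates chi2. *)

section \<open>Legendre's chi function\<close>

definition artanh_coeff :: "nat \<Rightarrow> real" where
  "artanh_coeff n = (if odd n then 1 / real n else 0)"

lemma artanh_sums:
  fixes x :: real
  assumes "\<bar>x\<bar> < 1"
  shows "(\<lambda>n. artanh_coeff n * x ^ n) sums artanh x"
proof -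
  define y where "y = (1 + x) / (1 - x)"
  have y: "0 < y" "(y - 1) / (y + 1) = x"
    using assms by (auto simp: y_def field_simps abs_less_iff)
  have "(\<lambda>n. 2 * x ^ (2 * n + 1) / of_nat (2 * n + 1)) sums ln y"
    using ln_series_quadratic[OF y(1)] by (simp only: y(2))
  from sums_mult[OF this, of "1 / 2"]
  have "(\<lambda>n. x ^ (2 * n + 1) / of_nat (2 * n + 1)) sums artanh x"
    by (simp add: artanh_def y_def)
  then show ?thesis
    by (subst sums_mono_reindex[of "\<lambda>n. 2 * n + 1", symmetric])
       (auto simp: artanh_coeff_def strict_mono_def elim!: oddE)
qed

definition chi2_coeff :: "nat \<Rightarrow> real" where
  "chi2_coeff n = (if odd n then 1 / (real n)\<^sup>2 else 0)"

definition legendre_chi2 :: "real \<Rightarrow> real" where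
  "legendre_chi2 x = (\<Sum>n. chi2_coeff n * x ^ n)"

lemma chi2_coeff_sums: "chi2_coeff sums (pi\<^sup>2 / 8)"
proof -
  define s where "s n = 1 / (real n)\<^sup>2" for n
  \<comment> \<open>\<open>s 0 = 0\<close> since \<open>1 / 0 = 0\<close>, so \<open>s\<close> sums to the same value as its shift\<close>
  have all: "s sums (pi\<^sup>2 / 6)"
    using inverse_squares_sums sums_Suc_iff[of s "pi\<^sup>2 / 6"] by (simp add: s_def)
  have "(\<lambda>k. s (2 * k)) sums (pi\<^sup>2 / 24)"
    using sums_divide[OF all, of 4] by (simp add: s_def mult.commute)
  then have even: "(\<lambda>n. if even n then s n else 0) sums (pi\<^sup>2 / 24)"
    by (subst sums_mono_reindex[of "\<lambda>k. 2 * k", symmetric])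
       (auto simp: strict_mono_def elim!: evenE)
  have "chi2_coeff = (\<lambda>n. s n - (if even n then s n else 0))"
    by (auto simp: fun_eq_iff chi2_coeff_def s_def)
  with sums_diff[OF all even] show ?thesis
    by simp
qed

lemma norm_chi2_coeff_power_le:
  fixes x :: real
  assumes "\<bar>x\<bar> \<le> 1"
  shows "norm (chi2_coeff n * x ^ n) \<le> chi2_coeff n"
  using assms by (auto simp: chi2_coeff_def abs_mult power_abs power_le_one intro!: divide_right_mono)

lemma summable_legendre_chi2:
  fixes x :: real
  assumes "\<bar>x\<bar> \<le> 1"
  shows "summable (\<lambda>n. chi2_coeff n * x ^ n)"
  using assms norm_chi2_coeff_power_le sums_summable[OF chi2_coeff_sums]
  by (blast intro: summable_comparison_test)

lemma legendre_chi2_0 [simp]: "legendre_chi2 0 = 0"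
  by (simp add: legendre_chi2_def chi2_coeff_def)

lemma legendre_chi2_1: "legendre_chi2 1 = pi\<^sup>2 / 8"
  using chi2_coeff_sums by (simp add: legendre_chi2_def sums_iff)

lemma continuous_on_legendre_chi2: "continuous_on {-1..1} legendre_chi2"
proof (rule uniform_limit_theorem)
  show "uniform_limit {-1..1} (\<lambda>n x. \<Sum>k<n. chi2_coeff k * x ^ k) legendre_chi2 sequentially"
    unfolding legendre_chi2_def
    by (rule Weierstrass_m_test[OF _ sums_summable[OF chi2_coeff_sums]])
       (use norm_chi2_coeff_power_le in \<open>auto simp: abs_le_iff\<close>)
qed (auto intro!: always_eventually continuous_intros)

lemma legendre_chi2_has_field_derivative:
  fixes x :: real
  assumes "x \<noteq> 0" "\<bar>x\<bar> < 1"
  shows "(legendre_chi2 has_field_derivative artanh x / x) (at x)"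
proof -
  have shifted: "(\<lambda>n. artanh_coeff (Suc n) * x ^ Suc n) sums artanh x"
    using artanh_sums[OF assms(2)] by (subst sums_Suc_iff) (simp add: artanh_coeff_def)
  have "(\<lambda>n. diffs chi2_coeff n * x ^ n) = (\<lambda>n. artanh_coeff (Suc n) * x ^ Suc n / x)"
    using assms(1) by (auto simp: fun_eq_iff diffs_def chi2_coeff_def artanh_coeff_def power2_eq_square)
  with sums_divide[OF shifted, of x]
  have "(\<lambda>n. diffs chi2_coeff n * x ^ n) sums (artanh x / x)"
    by (simp only:)
  moreover have "(legendre_chi2 has_field_derivative (\<Sum>n. diffs chi2_coeff n * x ^ n)) (at x)"
    unfolding legendre_chi2_def[abs_def]
    by (rule termdiffs_strong'[of 1]) (use summable_legendre_chi2 assms in auto)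
  ultimately show ?thesis
    by (simp add: sums_iff)
qed

lemma artanh_one_minus_div_one_plus:
  fixes x :: real
  assumes "0 < x" "x < 1"
  shows "artanh ((1 - x) / (1 + x)) = - ln x / 2"
proof -
  have nz: "1 + x \<noteq> 0" "x \<noteq> 0"
    using assms by auto
  have "1 + (1 - x) / (1 + x) = 2 / (1 + x)" "1 - (1 - x) / (1 + x) = 2 * x / (1 + x)"
    using nz by (simp_all add: field_simps)
  then have "(1 + (1 - x) / (1 + x)) / (1 - (1 - x) / (1 + x)) = 1 / x"
    using assms by (simp add: divide_simps)
  then show ?thesis
    using assms by (simp add: artanh_def ln_div)
qed

lemma has_field_derivative_legendre_chi2_landen:
  fixes x :: real
  assumes "0 < x" "x < 1"
  shows "((\<lambda>x. legendre_chi2 x + legendre_chi2 ((1 - x) / (1 + x)) - ln x * artanh x)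
          has_field_derivative 0) (at x)"
proof -
  define y where "y = (1 - x) / (1 + x)"
  have y: "y \<noteq> 0" "\<bar>y\<bar> < 1"
    using assms by (auto simp: y_def field_simps)
  have "((\<lambda>x. legendre_chi2 x + legendre_chi2 ((1 - x) / (1 + x)) - ln x * artanh x)
         has_field_derivative artanh x / x + artanh y / y * (- 2 / (1 + x)\<^sup>2)
           - (1 / x * artanh x + ln x * (1 / (1 - x\<^sup>2)))) (at x)"
    using assms y unfolding y_def
    by (auto intro!: derivative_eq_intros legendre_chi2_has_field_derivative
          legendre_chi2_has_field_derivative[THEN DERIV_chain2]
          simp: field_simps power2_eq_square)
  moreover have "artanh y / y * (- 2 / (1 + x)\<^sup>2) = ln x * (1 / (1 - x\<^sup>2))"
  proof -
    define p q where "p = 1 - x" and "q = 1 + x"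
    have "p \<noteq> 0" "q \<noteq> 0"
      using assms by (auto simp: p_def q_def)
    then have "(- ln x / 2) / (p / q) * (- 2 / q\<^sup>2) = ln x / (p * q)"
      by (simp add: field_simps power2_eq_square)
    moreover have "p * q = 1 - x\<^sup>2"
      by (simp add: p_def q_def algebra_simps power2_eq_square)
    ultimately show ?thesis
      by (simp add: y_def p_def q_def artanh_one_minus_div_one_plus[OF assms])
  qed
  ultimately show ?thesis
    by simp
qed

lemma legendre_chi2_landen:
  fixes x :: real
  assumes "0 < x" "x < 1"
  shows "legendre_chi2 x + legendre_chi2 ((1 - x) / (1 + x)) = pi\<^sup>2 / 8 + ln x * artanh x"
proof -
  define L where "L x = legendre_chi2 x + legendre_chi2 ((1 - x) / (1 + x)) - ln x * artanh x"
    for x :: real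
  have "\<forall>\<^sub>F y in at_left 1. L y = L x"
    using eventually_at_left_real[of 0 "1::real"]
  proof (rule eventually_mono)
    show "L y = L x" if "y \<in> {0<..<1}" for y
      by (rule DERIV_isconst3[of 0 1])
         (use assms that has_field_derivative_legendre_chi2_landen in \<open>auto simp: L_def[abs_def]\<close>)
  qed simp
  then have "(L \<longlongrightarrow> L x) (at_left 1)"
    by (rule tendsto_eventually)
  moreover have "(L \<longlongrightarrow> pi\<^sup>2 / 8) (at_left 1)"
  proof -
    have "isCont legendre_chi2 0"
      by (rule continuous_on_interior[OF continuous_on_legendre_chi2]) simp
    then have "((\<lambda>x. legendre_chi2 ((1 - x) / (1 + x))) \<longlongrightarrow> legendre_chi2 0) (at_left 1)"
      by (rule isCont_tendsto_compose) real_asymp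
    moreover have "((\<lambda>x. ln x * artanh x) \<longlongrightarrow> 0) (at_left (1::real))"
      unfolding artanh_def by real_asymp
    ultimately have "(L \<longlongrightarrow> legendre_chi2 1 + legendre_chi2 0 - 0) (at_left 1)"
      unfolding L_def[abs_def]
      by (intro tendsto_intros continuous_on_Icc_at_leftD[OF continuous_on_legendre_chi2]) auto
    then show ?thesis
      by (simp add: legendre_chi2_1)
  qed
  ultimately have "L x = pi\<^sup>2 / 8"
    using tendsto_unique[OF trivial_limit_at_left_real] by blast
  then show ?thesis
    by (simp add: L_def)
qed

lemma legendre_chi2_sqrt2_minus_1:
  "legendre_chi2 (sqrt 2 - 1) = pi\<^sup>2 / 16 - (ln (1 + sqrt 2))\<^sup>2 / 4"
proof -
  define c where "c = sqrt 2 - 1"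
  have c: "0 < c" "c < 1"
    using sqrt2_less_2 by (auto simp: c_def)
  have "0 < 1 + sqrt (2::real)"
    by (rule add_pos_nonneg) auto
  then have c_inverse: "c = 1 / (1 + sqrt 2)"
    by (simp add: c_def eq_divide_eq algebra_simps)
  have "(1 - c) / (1 + c) = c"
    by (simp add: c_def field_simps)
  then have "2 * legendre_chi2 c = pi\<^sup>2 / 8 + ln c * artanh c"
    using legendre_chi2_landen[OF c] by simp
  also have "ln c * artanh c = - (ln (1 + sqrt 2))\<^sup>2 / 2"
  proof -
    have "1 + c = (1 + sqrt 2) * (1 - c)"
      by (simp add: c_def algebra_simps)
    moreover have "1 - c \<noteq> 0"
      using c by simp
    ultimately have "artanh c = ln (1 + sqrt 2) / 2"
      by (simp add: artanh_def)
    moreover have "ln c = - ln (1 + sqrt 2)"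
      by (simp add: c_inverse ln_div)
    ultimately show ?thesis
      by (simp add: power2_eq_square)
  qed
  finally show ?thesis
    unfolding c_def by linarith
qed

section \<open>A primitive of the integrand\<close>

lemma has_integral_Ici_of_primitive:
  fixes f F :: "real \<Rightarrow> real"
  assumes cont: "continuous_on {a..} F"
    and deriv: "\<And>x. a < x \<Longrightarrow> (F has_real_derivative f x) (at x)"
    and nonneg: "\<And>x. a \<le> x \<Longrightarrow> 0 \<le> f x"
    and lim: "(F \<longlongrightarrow> L) at_top"
  shows "(f has_integral (L - F a)) {a..}"
proof -
  have primitive: "(f has_integral (F y - F a)) {a..y}" if "a \<le> y" for y
    by (rule fundamental_theorem_of_calculus_interior[OF that])
       (use cont deriv in \<open>auto intro: continuous_on_subset
          simp: has_real_derivative_iff_has_vector_derivative\<close>)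
  have "f integrable_on {a..y}" for y
    using primitive by (cases "a \<le> y") auto
  moreover have "((\<lambda>y. integral {a..y} f) \<longlongrightarrow> L - F a) at_top"
  proof (rule Lim_transform_eventually)
    show "((\<lambda>y. F y - F a) \<longlongrightarrow> L - F a) at_top"
      by (intro tendsto_intros lim)
    show "\<forall>\<^sub>F y in at_top. F y - F a = integral {a..y} f"
      using eventually_ge_at_top[of a] by eventually_elim (use primitive integral_unique in metis)
  qed
  ultimately show ?thesis
    using nonneg by (intro has_integral_to_inf) auto
qed

lemma one_minus_tanh_square_real: "1 - (tanh x)\<^sup>2 = 1 / (cosh x)\<^sup>2" for x :: real
proof -
  have "(cosh x)\<^sup>2 - (sinh x)\<^sup>2 = 1"
    by (simp add: cosh_square_eq)
  then show ?thesis
    by (simp add: tanh_def divide_simps)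
qed

lemma tanh_half_arsinh_1: "tanh (arsinh 1 / 2) = sqrt 2 - (1::real)"
proof -
  define b :: real where "b = 1 + sqrt 2"
  have b: "0 < b" "exp (arsinh 1) = b"
    by (simp_all add: b_def arsinh_real_def add_pos_nonneg)
  have "tanh (arsinh 1 / 2) = (1 - 1 / b) / (1 + 1 / b)"
    using b by (simp add: tanh_real_altdef exp_minus inverse_eq_divide)
  also have "\<dots> = (b - 1) / (b + 1)"
    using b by (simp add: divide_simps)
  also have "\<dots> = sqrt 2 - 1"
  proof -
    have "b - 1 = (sqrt 2 - 1) * (b + 1)"
      by (simp add: b_def algebra_simps)
    then show ?thesis
      using b by (simp add: divide_eq_eq)
  qed
  finally show ?thesis .
qed

lemma has_real_derivative_legendre_chi2_tanh_half:
  fixes g :: "real \<Rightarrow> real"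
  assumes g: "(g has_real_derivative g') (at x)" and pos: "0 < g x"
  shows "((\<lambda>x. legendre_chi2 (tanh (g x / 2))) has_real_derivative g x * g' / (2 * sinh (g x)))
           (at x)"
proof -
  define y where "y = g x / 2"
  have t: "tanh y \<noteq> 0" "\<bar>tanh y\<bar> < 1"
    using pos tanh_real_bounds[of y] by (auto simp: y_def)
  have "((\<lambda>x. legendre_chi2 (tanh (g x / 2))) has_real_derivative
          artanh (tanh y) / tanh y * ((1 - (tanh y)\<^sup>2) * (g' / 2))) (at x)"
    unfolding y_def
    by (rule DERIV_chain2[OF legendre_chi2_has_field_derivative])
       (use t in \<open>auto intro!: derivative_eq_intros g simp: y_def\<close>)
  moreover have "artanh (tanh y) / tanh y * ((1 - (tanh y)\<^sup>2) * (g' / 2)) = g x * g' / (2 * sinh (g x))"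
  proof -
    have "g x = 2 * y" "sinh (2 * y) = 2 * sinh y * cosh y"
      by (simp add: y_def) (rule sinh_double)
    then show ?thesis
      unfolding artanh_tanh_real one_minus_tanh_square_real
      using t by (simp add: tanh_def power2_eq_square mult_ac)
  qed
  ultimately show ?thesis
    by simp
qed

lemma arcosh_sinh_less:
  fixes u :: real
  assumes "1 \<le> sinh u"
  shows "arcosh (sinh u) < u"
proof -
  have "0 < u"
    using assms sinh_real_pos_iff[of u] by linarith
  have "arcosh (sinh u) < arcosh (cosh u)"
    using assms sinh_less_cosh_real[of u] by simp
  also have "arcosh (cosh u) = u"
    using \<open>0 < u\<close> by (simp add: arcosh_cosh_real)
  finally show ?thesis .
qed

lemma sinh_minus_arcosh_sinh:
  fixes u :: real
  assumes "1 \<le> sinh u"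
  shows "sinh (u - arcosh (sinh u)) = (sinh u)\<^sup>2 - cosh u * sqrt ((sinh u)\<^sup>2 - 1)"
  using assms by (simp add: sinh_diff sinh_arcosh_real power2_eq_square)

lemma one_le_sinh_iff_arsinh_le: "1 \<le> sinh u \<longleftrightarrow> arsinh 1 \<le> u" for u :: real
  using sinh_real_le_iff[of "arsinh 1" u] by simp

lemma one_less_sinh_iff_arsinh_less: "1 < sinh u \<longleftrightarrow> arsinh 1 < u" for u :: real
  using sinh_real_less_iff[of "arsinh 1" u] by simp

lemma tendsto_minus_arcosh_sinh_at_top: "((\<lambda>u::real. u - arcosh (sinh u)) \<longlongrightarrow> 0) at_top"
proof (rule Lim_transform_eventually)
  show "((\<lambda>u::real. u - ln (sinh u + sqrt ((sinh u)\<^sup>2 - 1))) \<longlongrightarrow> 0) at_top"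
    by real_asymp
  show "\<forall>\<^sub>F u in at_top. u - ln (sinh u + sqrt ((sinh u)\<^sup>2 - 1)) = u - arcosh (sinh u)"
    using eventually_ge_at_top[of "arsinh 1"]
    by (rule eventually_mono) (simp add: arcosh_real_def one_le_sinh_iff_arsinh_le)
qed

definition arcosh_sinh_primitive :: "real \<Rightarrow> real" where
  "arcosh_sinh_primitive u =
     (u - arcosh (sinh u))\<^sup>2 / 4 - legendre_chi2 (tanh ((u - arcosh (sinh u)) / 2))"

lemma arcosh_sinh_primitive_has_real_derivative:
  fixes u :: real
  assumes "1 < sinh u"
  shows "(arcosh_sinh_primitive has_real_derivative u - arcosh (sinh u)) (at u)"
proof -
  define s c r f where "s = sinh u" and "c = cosh u" and "r = sqrt (s\<^sup>2 - 1)"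
    and "f = u - arcosh s"
  have r: "0 < r" "r\<^sup>2 = s\<^sup>2 - 1"
    using assms by (simp_all add: r_def s_def one_less_power)
  have c: "c\<^sup>2 = s\<^sup>2 + 1"
    by (simp add: c_def s_def cosh_square_eq)
  have f: "0 < f"
    using arcosh_sinh_less[of u] assms by (simp add: f_def s_def)
  have sinh_f: "sinh f = s\<^sup>2 - c * r"
    using sinh_minus_arcosh_sinh[of u] assms by (simp add: f_def s_def c_def r_def)
  have df: "((\<lambda>u. u - arcosh (sinh u)) has_real_derivative 1 - c / r) (at u)"
    using assms
    by (auto intro!: derivative_eq_intros arcosh_real_has_field_derivative[THEN DERIV_chain2]
        simp: c_def r_def s_def)
  have "((\<lambda>u. (u - arcosh (sinh u))\<^sup>2 / 4) has_real_derivative (1 - c / r) * f / 2) (at u)"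
    using DERIV_cdivide[OF DERIV_power[OF df, of 2], of 4] by (simp add: f_def s_def)
  from DERIV_diff[OF this has_real_derivative_legendre_chi2_tanh_half[OF df]]
  have deriv: "(arcosh_sinh_primitive has_real_derivative
          (1 - c / r) * f / 2 - f * (1 - c / r) / (2 * sinh f)) (at u)"
    using f by (simp add: arcosh_sinh_primitive_def[abs_def] f_def s_def)
  have factor: "a * f / 2 - f * a / (2 * sinh f) = f / 2 * (a * (1 - 1 / sinh f))" for a
    by (simp add: algebra_simps)
  have "(1 - c / r) * (1 - 1 / sinh f) = 2"
  proof -
    have "(r - c) * (sinh f - 1) = 2 * r * sinh f"
      unfolding sinh_f using r(2) c by algebra
    then show ?thesis
      using r(1) f by (simp add: field_simps)
  qed
  then have "(1 - c / r) * f / 2 - f * (1 - c / r) / (2 * sinh f) = f"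
    unfolding factor by simp
  with deriv show ?thesis
    by (simp add: f_def s_def)
qed

lemma continuous_on_arcosh_sinh_primitive: "continuous_on {arsinh 1..} arcosh_sinh_primitive"
proof -
  have gap: "continuous_on {arsinh 1..} (\<lambda>u::real. u - arcosh (sinh u))"
    by (intro continuous_intros) (auto simp: one_le_sinh_iff_arsinh_le)
  have "continuous_on {arsinh 1..} (\<lambda>u::real. tanh ((u - arcosh (sinh u)) / 2))"
    by (intro continuous_intros gap) auto
  then have "continuous_on {arsinh 1..} (\<lambda>u. legendre_chi2 (tanh ((u - arcosh (sinh u)) / 2)))"
    by (rule continuous_on_compose2[OF continuous_on_legendre_chi2])
       (use tanh_real_bounds in \<open>auto simp: less_imp_le\<close>)
  then show ?thesis
    unfolding arcosh_sinh_primitive_def[abs_def]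
    by (auto intro!: continuous_intros simp: one_le_sinh_iff_arsinh_le)
qed

lemma tendsto_arcosh_sinh_primitive_at_top: "(arcosh_sinh_primitive \<longlongrightarrow> 0) at_top"
proof -
  have "((\<lambda>u::real. tanh ((u - arcosh (sinh u)) / 2)) \<longlongrightarrow> tanh (0 / 2)) at_top"
    by (intro tendsto_intros tendsto_minus_arcosh_sinh_at_top) simp_all
  then have "((\<lambda>u::real. tanh ((u - arcosh (sinh u)) / 2)) \<longlongrightarrow> 0) at_top"
    by simp
  moreover have "isCont legendre_chi2 0"
    by (rule continuous_on_interior[OF continuous_on_legendre_chi2]) simp
  ultimately have "((\<lambda>u. legendre_chi2 (tanh ((u - arcosh (sinh u)) / 2))) \<longlongrightarrow> legendre_chi2 0) at_top"
    using isCont_tendsto_compose by blast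
  then have "(arcosh_sinh_primitive \<longlongrightarrow> 0\<^sup>2 / 4 - legendre_chi2 0) at_top"
    unfolding arcosh_sinh_primitive_def[abs_def]
    by (intro tendsto_intros tendsto_minus_arcosh_sinh_at_top) simp_all
  then show ?thesis
    by simp
qed

theorem theorem2:
  shows "((\<lambda>u::real. u - arcosh (sinh u)) has_integral
            (pi\<^sup>2 / 16 - (ln (1 + sqrt 2))\<^sup>2 / 2)) {arsinh 1..}"
proof -
  have "((\<lambda>u::real. u - arcosh (sinh u)) has_integral (0 - arcosh_sinh_primitive (arsinh 1))) {arsinh 1..}"
  proof (rule has_integral_Ici_of_primitive)
    show "(arcosh_sinh_primitive has_real_derivative u - arcosh (sinh u)) (at u)"
      if "arsinh 1 < u" for u :: real
      using that by (intro arcosh_sinh_primitive_has_real_derivative)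
        (simp add: one_less_sinh_iff_arsinh_less)
    show "0 \<le> u - arcosh (sinh u)" if "arsinh 1 \<le> u" for u :: real
      using arcosh_sinh_less[of u] that by (simp add: one_le_sinh_iff_arsinh_le)
  qed (use continuous_on_arcosh_sinh_primitive tendsto_arcosh_sinh_primitive_at_top in auto)
  moreover have "arcosh_sinh_primitive (arsinh 1) = (arsinh 1)\<^sup>2 / 4 - legendre_chi2 (sqrt 2 - 1)"
    by (simp add: arcosh_sinh_primitive_def tanh_half_arsinh_1)
  moreover have "arsinh 1 = ln (1 + sqrt (2::real))"
    by (simp add: arsinh_real_def add.commute)
  ultimately show ?thesis
    by (simp add: legendre_chi2_sqrt2_minus_1)
qed

end
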